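(* Let $p\ge1$ and for $0<\alpha\le2$ let $Q(\alpha,p)$ be the infimum of all $q$ with the property: for every $\varepsilon>0$ there is $C_\varepsilon>0$ such that $$\int_{B(0,R)}|\mathcal T^\lambda f|^qH(x)\,dx\le C_\varepsilon A_\alpha(H)R^\varepsilon\|f\|_{L^p}^q$$ for all $\lambda\ge1$, $1\le R\le\lambda$, all $f\in L^p$ supported in $(0,1)$ and all $\alpha$-dimensional weights $H$. Then for $0<\beta<\alpha\le2$, $$\frac{Q(\alpha,p)}{\alpha}\le\frac{Q(\beta,p)}{\beta}.$$
   Context: Let $\phi(x,\xi)$, $x\in\mathbb{R}^2$, $\xi\in\mathbb{R}$, be a real smooth function on a neighborhood of $\overline{B(0,1)}\times[0,1]$ satisfying the Carleson–Sjölin condition: the $2\times2$ matrix with rows $\partial_\xi\nabla_x\phi(x,\xi)$ and $\partial_\xi^2\nabla_x\phi(x,\xi)$ has rank 2 everywhere there. Let $a\in C_c^\infty(B(0,1)\times(0,1))$. For $\lambda\ge1$ put $\phi^\lambda(x,\xi)=\lambda\phi(x/\lambda,\xi)$, $a^\lambda(x,\xi)=a(x/\lambda,\xi)$, and for $f$ supported in $(0,1)$, $\mathcal T^\lambda f(x)=\int e^{i\phi^\lambda(x,\xi)}a^\lambda(x,\xi)f(\xi)\,d\xi$. A measurable $H:\mathbb{R}^2\to[0,1]$ is an $\alpha$-dimensional weight if $A_\alpha(H):=\inf\{C\ge0:\int_{B(x_0,r)}H\,dx\le Cr^\alpha\text{ for all }x_0\in\mathbb{R}^2,\ r\ge1\}<\infty$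 (and $H\not\equiv0$). *)

theory Defs
  imports "HOL-Analysis.Analysis"
begin

fun iter_pd :: "'a::real_normed_vector list \<Rightarrow> ('a \<Rightarrow> 'b::real_normed_vector) \<Rightarrow> 'a \<Rightarrow> 'b" where
  "iter_pd [] f = f"
| "iter_pd (v # vs) f = (\<lambda>z. frechet_derivative (iter_pd vs f) (at z) v)"

definition smooth_on :: "'a::euclidean_space set \<Rightarrow> ('a \<Rightarrow> 'b::real_normed_vector) \<Rightarrow> bool" where
  "smooth_on U f \<longleftrightarrow> (\<forall>vs. set vs \<subseteq> Basis \<longrightarrow> iter_pd vs f differentiable_on U)"

definition e_x :: "2 \<Rightarrow> (real^2) \<times> real" where
  "e_x j = (axis j 1, 0)"

definition e_xi :: "(real^2) \<times> real" where
  "e_xi = (0, 1)"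

text \<open>The 2x2 matrix with rows  d_xi grad_x phi  and  d_xi^2 grad_x phi.\<close>
definition CS_matrix :: "(real^2 \<Rightarrow> real \<Rightarrow> real) \<Rightarrow> real^2 \<Rightarrow> real \<Rightarrow> real^2^2" where
  "CS_matrix phi x xi = (\<chi> i j. if i = 1
      then iter_pd [e_xi, e_x j] (case_prod phi) (x, xi)
      else iter_pd [e_xi, e_xi, e_x j] (case_prod phi) (x, xi))"

definition phase_ok :: "(real^2 \<Rightarrow> real \<Rightarrow> real) \<Rightarrow> bool" where
  "phase_ok phi \<longleftrightarrow>
     (\<exists>U. open U \<and> cball 0 1 \<times> {0..1} \<subseteq> U \<and> smooth_on U (case_prod phi)) \<and>
     (\<forall>x xi. x \<in> cball 0 1 \<and> xi \<in> {0..1} \<longrightarrow> rank (CS_matrix phi x xi) = 2)"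

definition amplitude_ok :: "(real^2 \<Rightarrow> real \<Rightarrow> complex) \<Rightarrow> bool" where
  "amplitude_ok a \<longleftrightarrow> smooth_on UNIV (case_prod a) \<and>
     compact (closure {z. case_prod a z \<noteq> 0}) \<and>
     closure {z. case_prod a z \<noteq> 0} \<subseteq> ball 0 1 \<times> {0<..<1}"

definition T_lam :: "(real^2 \<Rightarrow> real \<Rightarrow> real) \<Rightarrow> (real^2 \<Rightarrow> real \<Rightarrow> complex) \<Rightarrow> real
    \<Rightarrow> (real \<Rightarrow> complex) \<Rightarrow> real^2 \<Rightarrow> complex" where
  "T_lam phi a lam f x = (LINT xi|lborel.
      exp (\<i> * complex_of_real (lam * phi (x /\<^sub>R lam) xi)) * a (x /\<^sub>R lam) xi * f xi)"

definition in_Lp :: "real \<Rightarrow> (real \<Rightarrow> complex) \<Rightarrow> bool" where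
  "in_Lp p f \<longleftrightarrow> f \<in> borel_measurable lborel \<and> integrable lborel (\<lambda>xi. norm (f xi) powr p)"

definition Lp_norm :: "real \<Rightarrow> (real \<Rightarrow> complex) \<Rightarrow> real" where
  "Lp_norm p f = (LINT xi|lborel. norm (f xi) powr p) powr (1 / p)"

definition A_set :: "real \<Rightarrow> (real^2 \<Rightarrow> real) \<Rightarrow> real set" where
  "A_set alpha H = {C. C \<ge> 0 \<and> (\<forall>x0 r. r \<ge> 1 \<longrightarrow>
      (\<integral>\<^sup>+ x \<in> ball x0 r. ennreal (H x) \<partial>lborel) \<le> ennreal (C * r powr alpha))}"

definition A_alpha :: "real \<Rightarrow> (real^2 \<Rightarrow> real) \<Rightarrow> real" where
  "A_alpha alpha H = Inf (A_set alpha H)"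

definition alpha_weight :: "real \<Rightarrow> (real^2 \<Rightarrow> real) \<Rightarrow> bool" where
  "alpha_weight alpha H \<longleftrightarrow> H \<in> borel_measurable lborel \<and> (\<forall>x. 0 \<le> H x \<and> H x \<le> 1) \<and>
     A_set alpha H \<noteq> {} \<and> (\<exists>x. H x \<noteq> 0)"

definition good_q :: "(real^2 \<Rightarrow> real \<Rightarrow> real) \<Rightarrow> (real^2 \<Rightarrow> real \<Rightarrow> complex) \<Rightarrow> real \<Rightarrow> real \<Rightarrow> real \<Rightarrow> bool" where
  "good_q phi a alpha p q \<longleftrightarrow>
     (\<forall>eps>0. \<exists>C>0. \<forall>lam R f H. 1 \<le> lam \<and> 1 \<le> R \<and> R \<le> lam \<and> in_Lp p f \<and>
        (\<forall>xi. xi \<notin> {0<..<1} \<longrightarrow> f xi = 0) \<and> alpha_weight alpha H \<longrightarrow>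
        (\<integral>\<^sup>+ x \<in> ball 0 R. ennreal (norm (T_lam phi a lam f x) powr q * H x) \<partial>lborel)
          \<le> ennreal (C * A_alpha alpha H * R powr eps * Lp_norm p f powr q))"

text \<open>Q(alpha,p), as an extended real (= +infinity if no q works).\<close>
definition Qexp :: "(real^2 \<Rightarrow> real \<Rightarrow> real) \<Rightarrow> (real^2 \<Rightarrow> real \<Rightarrow> complex) \<Rightarrow> real \<Rightarrow> real \<Rightarrow> ereal" where
  "Qexp phi a alpha p = Inf (ereal ` {q. q > 0 \<and> good_q phi a alpha p q})"

end

theory Submission
  imports Defs
begin

text \<open>If \<open>q\<close> is admissible for dimension \<open>\<beta>\<close>, then \<open>Q = q \<alpha> / \<beta>\<close> is admissible for
  dimension \<open>\<alpha>\<close>. Given an \<open>\<alpha>\<close>-dimensional weight \<open>H\<close>, let \<open>I\<close> be the integral of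
  \<open>|T f|^Q H\<close> over \<open>B(0,R)\<close>. The function \<open>G = H |T f|^(Q - q)\<close> on \<open>B(0,R)\<close>, normalised by
  \<open>sup |T f|\<close>, is a weight of dimension \<open>\<beta>\<close>: Hoelder's inequality with exponents \<open>\<alpha>/\<beta>\<close> and
  \<open>\<alpha>/(\<alpha> - \<beta>)\<close> bounds its integral over \<open>B(x0,r)\<close> by \<open>(A\<^sub>\<alpha>(H) r^\<alpha>)^(\<beta>/\<alpha>) I^(1 - \<beta>/\<alpha>)\<close>.
  The integral of \<open>|T f|^q G\<close> over \<open>B(0,R)\<close> is a multiple of \<open>I\<close>, so the \<open>\<beta>\<close>-estimate for \<open>G\<close>
  bounds \<open>I\<close> by \<open>C A\<^sub>\<alpha>(H)^(\<beta>/\<alpha>) I^(1 - \<beta>/\<alpha>) R^\<epsilon> \<parallel>f\<parallel>^q\<close>; absorbing the power of \<open>I\<close>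
  yields the \<open>\<alpha>\<close>-estimate with exponent \<open>Q\<close>, and taking infima over \<open>q\<close> gives the theorem.\<close>

lemma Youngs_inequality_normalized:
  fixes u w U V s :: real
  assumes "0 \<le> u" "0 \<le> w" "0 < U" "0 < V" "0 < s" "s < 1"
  shows "u powr (1 - s) * w powr s \<le> U powr (1 - s) * V powr s * ((1 - s) * (u / U) + s * (w / V))"
proof (cases "u = 0 \<or> w = 0")
  case True
  then show ?thesis using assms by (auto intro!: mult_nonneg_nonneg add_nonneg_nonneg)
next
  case False
  define P where "P = U powr (1 - s) * V powr s"
  have P: "0 < P" using assms by (simp add: P_def)
  have "(u / U) powr (1 - s) * (w / V) powr s \<le> (1 - s) * (u / U) + s * (w / V)"
    using False assms by (intro Youngs_inequality_0) auto
  moreover have "(u / U) powr (1 - s) * (w / V) powr s = u powr (1 - s) * w powr s / P"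
    using assms by (simp add: powr_divide P_def)
  ultimately have "u powr (1 - s) * w powr s \<le> P * ((1 - s) * (u / U) + s * (w / V))"
    using P by (simp add: divide_le_eq mult.commute)
  then show ?thesis by (simp add: P_def)
qed

lemma Holder_inequality_nn_integral:
  fixes u w :: "'a \<Rightarrow> real" and U V s :: real
  assumes "u \<in> borel_measurable M" "w \<in> borel_measurable M"
    and "\<And>x. 0 \<le> u x" "\<And>x. 0 \<le> w x" and s: "0 < s" "s < 1"
    and "(\<integral>\<^sup>+x. u x \<partial>M) \<le> ennreal U" "(\<integral>\<^sup>+x. w x \<partial>M) \<le> ennreal V" and UV: "0 < U" "0 < V"
  shows "(\<integral>\<^sup>+x. u x powr (1 - s) * w x powr s \<partial>M) \<le> ennreal (U powr (1 - s) * V powr s)"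
proof -
  define c where "c = U powr (1 - s) * V powr s"
  have c: "0 < c" using UV by (simp add: c_def)
  have "(\<integral>\<^sup>+x. u x powr (1 - s) * w x powr s \<partial>M)
      \<le> (\<integral>\<^sup>+x. ennreal (c * (1 - s) / U) * u x + ennreal (c * s / V) * w x \<partial>M)"
  proof (rule nn_integral_mono)
    fix x
    have "u x powr (1 - s) * w x powr s \<le> c * (1 - s) / U * u x + c * s / V * w x"
      using Youngs_inequality_normalized[of "u x" "w x" U V s] assms
      by (simp add: c_def algebra_simps)
    then show "ennreal (u x powr (1 - s) * w x powr s)
        \<le> ennreal (c * (1 - s) / U) * u x + ennreal (c * s / V) * w x"
      using assms c by (simp add: ennreal_mult[symmetric] ennreal_plus[symmetric] del: ennreal_plus)
  qed
  also have "\<dots> = ennreal (c * (1 - s) / U) * (\<integral>\<^sup>+x. u x \<partial>M) + ennreal (c * s / V) * (\<integral>\<^sup>+x. w x \<partial>M)"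
    using assms by (simp add: nn_integral_add nn_integral_cmult)
  also have "\<dots> \<le> ennreal (c * (1 - s) / U) * U + ennreal (c * s / V) * V"
    using assms by (intro add_mono mult_left_mono) auto
  also have "\<dots> = ennreal c"
    using s c UV by (simp add: ennreal_mult[symmetric] ennreal_plus[symmetric] field_simps
        del: ennreal_plus)
  finally show ?thesis by (simp add: c_def)
qed

lemma le_one_plus_powr:
  fixes y p :: real
  assumes "1 \<le> p" "0 \<le> y"
  shows "y \<le> 1 + y powr p"
proof (cases "y \<le> 1")
  case False
  with assms have "y powr 1 \<le> y powr p" by (intro powr_mono) auto
  with False show ?thesis by simp
qed (use assms in \<open>simp add: add_increasing2\<close>)

lemma absorb_powr_bound:
  fixes x C A R L q alpha beta eps :: real
  assumes x: "0 < x" and nonneg: "0 \<le> C" "0 \<le> A" "0 \<le> R" "0 \<le> L" and beta: "0 < beta" "0 < alpha"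
    and le: "x \<le> C * (A powr (beta / alpha) * x powr (1 - beta / alpha)) * R powr (eps * beta / alpha) * L powr q"
  shows "x \<le> C powr (alpha / beta) * A * R powr eps * L powr (q * alpha / beta)"
proof -
  define Z where "Z = C * A powr (beta / alpha) * R powr (eps * beta / alpha) * L powr q"
  have "x powr (beta / alpha) * x powr (1 - beta / alpha) = x"
    using x by (simp flip: powr_add)
  with le have "x powr (beta / alpha) * x powr (1 - beta / alpha) \<le> Z * x powr (1 - beta / alpha)"
    by (simp add: Z_def mult_ac)
  then have "x powr (beta / alpha) \<le> Z"
    using x by simp
  then have "(x powr (beta / alpha)) powr (alpha / beta) \<le> Z powr (alpha / beta)"
    using beta by (intro powr_mono2) auto
  also have "Z powr (alpha / beta) = C powr (alpha / beta) * A * R powr eps * L powr (q * alpha / beta)"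
    using nonneg beta by (simp add: Z_def powr_mult powr_powr)
  finally show ?thesis
    using x beta by (simp add: powr_powr)
qed

lemma nn_set_integral_cmult:
  assumes "f \<in> borel_measurable M" "A \<in> sets M"
  shows "(\<integral>\<^sup>+x \<in> A. c * f x \<partial>M) = c * (\<integral>\<^sup>+x \<in> A. f x \<partial>M)"
  using assms by (simp add: mult.assoc nn_integral_cmult)

lemma set_nn_integral_bounded_less_top:
  fixes h :: "'a::euclidean_space \<Rightarrow> real"
  assumes "bounded S" "S \<in> sets lborel" "\<And>x. x \<in> S \<Longrightarrow> h x \<le> B"
  shows "(\<integral>\<^sup>+x \<in> S. h x \<partial>lborel) < \<infinity>"
proof -
  have "(\<integral>\<^sup>+x \<in> S. h x \<partial>lborel) \<le> (\<integral>\<^sup>+x. ennreal B * indicator S x \<partial>lborel)"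
    using assms(3) by (intro nn_integral_mono) (simp add: ennreal_leI split: split_indicator)
  also have "\<dots> = ennreal B * emeasure lborel S"
    using assms(2) by (rule nn_integral_cmult_indicator)
  also have "\<dots> < \<infinity>"
    using emeasure_bounded_finite[OF assms(1)] by (simp add: ennreal_mult_less_top)
  finally show ?thesis .
qed

lemma ennreal_le_of_real_le:
  assumes "x < \<infinity>" "\<And>r. x = ennreal r \<Longrightarrow> 0 < r \<Longrightarrow> r \<le> y"
  shows "x \<le> ennreal y"
proof (cases "x = 0")
  case False
  with assms(1) obtain r where "x = ennreal r" "0 < r"
    by (cases x) (auto simp: less_le)
  with assms(2) show ?thesis by (simp add: ennreal_leI)
qed simp

section \<open>Dimensional weights\<close>

lemma A_set_add:
  assumes A: "A \<in> A_set alpha H" and d: "0 \<le> d"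
  shows "A + d \<in> A_set alpha H"
  unfolding A_set_def
proof (intro CollectI conjI allI impI)
  show "0 \<le> A + d" using A d by (simp add: A_set_def)
  fix x0 :: "real^2" and r :: real assume "1 \<le> r"
  with A have "(\<integral>\<^sup>+x \<in> ball x0 r. H x \<partial>lborel) \<le> ennreal (A * r powr alpha)"
    by (simp add: A_set_def)
  also have "\<dots> \<le> ennreal ((A + d) * r powr alpha)"
    using d by (intro ennreal_leI mult_right_mono) auto
  finally show "(\<integral>\<^sup>+x \<in> ball x0 r. H x \<partial>lborel) \<le> ennreal ((A + d) * r powr alpha)" .
qed

lemma A_set_obtain_pos:
  assumes "A_set alpha H \<noteq> {}"
  obtains A where "A \<in> A_set alpha H" "0 < A"
proof -
  from assms obtain A where A: "A \<in> A_set alpha H" by blast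
  then have "0 < A + 1" by (simp add: A_set_def add_nonneg_pos)
  with A_set_add[OF A zero_le_one] show thesis by (rule that)
qed

lemma A_alpha_le: "B \<in> A_set alpha H \<Longrightarrow> A_alpha alpha H \<le> B"
  unfolding A_alpha_def by (rule cInf_lower) (auto simp: bdd_below_def A_set_def)

lemma le_mult_A_alpha:
  assumes ne: "A_set alpha H \<noteq> {}" and c: "0 \<le> c"
    and le: "\<And>A. A \<in> A_set alpha H \<Longrightarrow> 0 < A \<Longrightarrow> y \<le> c * A"
  shows "y \<le> c * A_alpha alpha H"
proof -
  have le_all: "y \<le> c * A" if A: "A \<in> A_set alpha H" for A
  proof (rule field_le_epsilon)
    fix d :: real assume "0 < d"
    have "0 \<le> A" using A by (simp add: A_set_def)
    then have "y \<le> c * (A + d / (c + 1))"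
      using \<open>0 < d\<close> c by (intro le A_set_add[OF A]) (auto intro!: add_nonneg_pos)
    also have "\<dots> \<le> c * A + d"
      using \<open>0 < d\<close> c by (simp add: field_simps)
    finally show "y \<le> c * A + d" .
  qed
  show ?thesis
  proof (cases "c = 0")
    case True
    with ne le_all show ?thesis by auto
  next
    case False
    with c have "y / c \<le> A_alpha alpha H"
      unfolding A_alpha_def using ne le_all by (intro cInf_greatest) (auto simp: field_simps)
    with False c show ?thesis by (simp add: field_simps)
  qed
qed

lemma A_set_geometric_mean:
  fixes H g :: "real^2 \<Rightarrow> real"
  assumes H: "H \<in> borel_measurable borel" "\<And>x. 0 \<le> H x"
    and A: "A \<in> A_set alpha H" "0 < A"
    and g: "g \<in> borel_measurable borel" "\<And>x. 0 \<le> g x"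
    and V: "(\<integral>\<^sup>+x. H x * g x \<partial>lborel) \<le> ennreal V" "0 < V"
    and beta: "0 < beta" "beta < alpha"
  shows "A powr (beta / alpha) * V powr (1 - beta / alpha)
      \<in> A_set beta (\<lambda>x. H x * g x powr (1 - beta / alpha))"
  unfolding A_set_def
proof (intro CollectI conjI allI impI)
  define s where "s = 1 - beta / alpha"
  have s: "0 < s" "s < 1" "1 - s = beta / alpha" using beta by (auto simp: s_def field_simps)
  show "0 \<le> A powr (beta / alpha) * V powr (1 - beta / alpha)" by simp
  fix x0 :: "real^2" and r :: real assume r: "1 \<le> r"
  define u where "u x = indicator (ball x0 r) x * H x" for x
  have "ball x0 r \<in> sets borel" by simp
  then have u: "u \<in> borel_measurable lborel"
    using H unfolding u_def by measurable
  have u_nonneg: "0 \<le> u x" for x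
    using H by (simp add: u_def)
  have "(\<integral>\<^sup>+x. u x \<partial>lborel) = (\<integral>\<^sup>+x \<in> ball x0 r. H x \<partial>lborel)"
    unfolding u_def by (rule nn_integral_cong) (simp split: split_indicator)
  also have "\<dots> \<le> ennreal (A * r powr alpha)"
    using A r by (auto simp: A_set_def)
  finally have "(\<integral>\<^sup>+x. u x powr (1 - s) * (H x * g x) powr s \<partial>lborel)
      \<le> ennreal ((A * r powr alpha) powr (1 - s) * V powr s)"
    using H g V A s r u u_nonneg by (intro Holder_inequality_nn_integral) auto
  moreover have "u x powr (1 - s) * (H x * g x) powr s
      = indicator (ball x0 r) x * (H x * g x powr s)" for x
  proof (cases "x \<in> ball x0 r \<and> H x \<noteq> 0")
    case True
    then have "u x powr (1 - s) * (H x * g x) powr s = (H x powr (1 - s) * H x powr s) * g x powr s"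
      using H g by (simp add: u_def powr_mult)
    with True H show ?thesis by (simp flip: powr_add)
  qed (use s in \<open>auto simp: u_def\<close>)
  moreover have "(A * r powr alpha) powr (1 - s) = A powr (beta / alpha) * r powr beta"
    using A r beta s by (simp add: powr_mult powr_powr)
  ultimately show "(\<integral>\<^sup>+x \<in> ball x0 r. H x * g x powr (1 - beta / alpha) \<partial>lborel)
      \<le> ennreal (A powr (beta / alpha) * V powr (1 - beta / alpha) * r powr beta)"
    by (simp add: s_def mult_ac indicator_mult_ennreal)
qed

section \<open>The oscillatory integral operator\<close>

lemma smooth_on_imp_continuous_on: "smooth_on U f \<Longrightarrow> continuous_on U f"
  unfolding smooth_on_def by (drule spec[of _ "[]"]) (simp add: differentiable_imp_continuous_on)

lemma amplitude_ok_nonzero: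
  assumes "amplitude_ok a" "a y xi \<noteq> 0"
  shows "y \<in> ball 0 1" "0 < xi" "xi < 1"
proof -
  have "(y, xi) \<in> closure {z. case_prod a z \<noteq> 0}"
    using assms(2) closure_subset by fastforce
  then have "(y, xi) \<in> ball 0 1 \<times> {0<..<1}"
    using assms(1) unfolding amplitude_ok_def by (auto dest: subsetD)
  then show "y \<in> ball 0 1" "0 < xi" "xi < 1" by auto
qed

lemma amplitude_ok_bounded:
  assumes "amplitude_ok a"
  obtains M where "0 < M" "\<And>x xi. norm (a x xi) \<le> M"
proof -
  let ?K = "closure {z. case_prod a z \<noteq> 0}"
  have "continuous_on ?K (case_prod a)"
    using assms smooth_on_imp_continuous_on continuous_on_subset
    unfolding amplitude_ok_def by blast
  then have "bounded (case_prod a ` ?K)"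
    using assms by (intro compact_imp_bounded compact_continuous_image) (auto simp: amplitude_ok_def)
  then obtain M where M: "0 < M" "\<And>z. z \<in> ?K \<Longrightarrow> norm (case_prod a z) \<le> M"
    unfolding bounded_pos by blast
  have "norm (a x xi) \<le> M" for x xi
    using M closure_subset[of "{z. case_prod a z \<noteq> 0}"] by (cases "a x xi = 0") force+
  with M(1) show thesis by (rule that)
qed

definition T_kernel :: "(real^2 \<Rightarrow> real \<Rightarrow> real) \<Rightarrow> (real^2 \<Rightarrow> real \<Rightarrow> complex) \<Rightarrow> real
    \<Rightarrow> real^2 \<Rightarrow> real \<Rightarrow> complex" where
  "T_kernel phi a lam x xi = exp (\<i> * complex_of_real (lam * phi (x /\<^sub>R lam) xi)) * a (x /\<^sub>R lam) xi"

lemma T_lam_eq_kernel: "T_lam phi a lam f x = (LINT xi|lborel. T_kernel phi a lam x xi * f xi)"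
  by (simp add: T_lam_def T_kernel_def)

lemma T_kernel_eq_indicator:
  assumes "amplitude_ok a" "0 < lam"
  shows "T_kernel phi a lam x xi
      = indicator (ball 0 lam \<times> {0<..<1}) (x, xi) *\<^sub>R T_kernel phi a lam x xi"
proof (cases "a (x /\<^sub>R lam) xi = 0")
  case False
  with amplitude_ok_nonzero[OF assms(1) False] assms(2)
  have "x \<in> ball 0 lam" "0 < xi" "xi < 1"
    by (auto simp: field_simps)
  then show ?thesis by simp
qed (simp add: T_kernel_def)

text \<open>Off the support of the amplitude the phase is irrelevant, so only the continuity of
  the phase near \<open>cball 0 1 \<times> {0..1}\<close> is needed.\<close>

lemma T_kernel_measurable:
  assumes ph: "phase_ok phi" and am: "amplitude_ok a" and lam: "0 < lam"
  shows "(\<lambda>z. T_kernel phi a lam (fst z) (snd z)) \<in> borel_measurable borel"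
proof -
  obtain U where U: "cball 0 1 \<times> {0..1} \<subseteq> U" "continuous_on U (case_prod phi)"
    using ph smooth_on_imp_continuous_on unfolding phase_ok_def by blast
  have a: "continuous_on UNIV (case_prod a)"
    using am smooth_on_imp_continuous_on unfolding amplitude_ok_def by blast
  let ?S = "ball (0::real^2) lam \<times> {0<..<1::real}"
  let ?h = "\<lambda>z::(real^2) \<times> real. (fst z /\<^sub>R lam, snd z)"
  have h: "continuous_on ?S ?h" by (intro continuous_intros)
  have "?h ` ?S \<subseteq> U"
    using U(1) lam by (auto simp: field_simps)
  then have "continuous_on ?S (\<lambda>z. case_prod phi (?h z))"
    by (rule continuous_on_compose2[OF U(2) h])
  moreover have "continuous_on ?S (\<lambda>z. case_prod a (?h z))"
    by (rule continuous_on_compose2[OF a h]) auto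
  ultimately have "continuous_on ?S
      (\<lambda>z. exp (\<i> * complex_of_real (lam * case_prod phi (?h z))) * case_prod a (?h z))"
    by (intro continuous_intros)
  then have "(\<lambda>z. indicator ?S z *\<^sub>R
      (exp (\<i> * complex_of_real (lam * case_prod phi (?h z))) * case_prod a (?h z)))
      \<in> borel_measurable borel"
    by (intro borel_measurable_continuous_on_indicator) (auto simp: open_Times)
  then have "(\<lambda>z. indicator ?S z *\<^sub>R T_kernel phi a lam (fst z) (snd z)) \<in> borel_measurable borel"
    by (simp add: T_kernel_def case_prod_beta')
  moreover have "indicator ?S z *\<^sub>R T_kernel phi a lam (fst z) (snd z) = T_kernel phi a lam (fst z) (snd z)" for z
    using T_kernel_eq_indicator[OF am lam, of phi "fst z" "snd z"] by simp
  ultimately show ?thesis by simp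
qed

lemma T_lam_measurable:
  assumes "phase_ok phi" "amplitude_ok a" "0 < lam" "f \<in> borel_measurable borel"
  shows "T_lam phi a lam f \<in> borel_measurable lborel"
proof -
  have "(\<lambda>z::(real^2) \<times> real. f (snd z)) \<in> borel_measurable borel"
    using measurable_compose[OF measurable_snd[of "borel :: (real^2) measure"] assms(4)]
    unfolding borel_prod .
  then have "(\<lambda>z. T_kernel phi a lam (fst z) (snd z) * f (snd z)) \<in> borel_measurable borel"
    using T_kernel_measurable[OF assms(1-3)] by (rule borel_measurable_times[rotated])
  moreover have "sets (lborel \<Otimes>\<^sub>M lborel) = sets (borel :: ((real^2) \<times> real) measure)"
    using sets_pair_measure_cong[OF sets_lborel sets_lborel] by (simp only: borel_prod)
  ultimately have "(\<lambda>(x, xi). T_kernel phi a lam x xi * f xi) \<in> borel_measurable (lborel \<Otimes>\<^sub>M lborel)"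
    unfolding case_prod_beta' by (subst measurable_cong_sets) auto
  then show ?thesis
    unfolding T_lam_eq_kernel[abs_def] by (rule lborel.borel_measurable_lebesgue_integral)
qed

lemma T_lam_bounded:
  assumes ph: "phase_ok phi" and am: "amplitude_ok a" and lam: "0 < lam"
    and f: "in_Lp p f" and p: "1 \<le> p"
  obtains M where "0 < M" "\<And>x. norm (T_lam phi a lam f x) \<le> M"
proof -
  obtain Ma where Ma: "0 < Ma" "\<And>x xi. norm (a x xi) \<le> Ma"
    using amplitude_ok_bounded[OF am] by blast
  have fm: "f \<in> borel_measurable borel" using f by (simp add: in_Lp_def)
  define h where "h xi = Ma * (indicator {0<..<1::real} xi + norm (f xi) powr p)" for xi
  have h: "integrable lborel h"
    using f unfolding h_def in_Lp_def by (intro integrable_mult_right Bochner_Integration.integrable_add) auto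
  have norm_le: "norm (T_kernel phi a lam x xi * f xi) \<le> h xi" for x xi
  proof (cases "0 < xi \<and> xi < 1")
    case True
    then have "norm (T_kernel phi a lam x xi * f xi) \<le> Ma * (1 + norm (f xi) powr p)"
      using Ma p by (auto simp: T_kernel_def norm_mult intro!: mult_mono le_one_plus_powr)
    with True show ?thesis by (simp add: h_def)
  next
    case False
    then show ?thesis
      using T_kernel_eq_indicator[OF am lam, of phi x xi] Ma(1) by (simp add: h_def)
  qed
  have "norm (T_lam phi a lam f x) \<le> (LINT xi|lborel. h xi)" for x
  proof -
    have "(\<lambda>xi::real. (x, xi)) \<in> borel_measurable borel"
      by (intro borel_measurable_continuous_onI continuous_intros)
    from measurable_compose[OF this T_kernel_measurable[OF ph am lam]]
    have "(\<lambda>xi. T_kernel phi a lam x xi * f xi) \<in> borel_measurable lborel"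
      using fm by simp
    then have "integrable lborel (\<lambda>xi. T_kernel phi a lam x xi * f xi)"
      using h norm_le by (intro Bochner_Integration.integrable_bound[OF h]) (auto intro: order_trans[OF _ abs_ge_self])
    then show ?thesis
      unfolding T_lam_eq_kernel using h norm_le by (intro Bochner_Integration.integral_norm_bound_integral) auto
  qed
  moreover have "0 \<le> (LINT xi|lborel. h xi)"
    using Ma(1) by (intro Bochner_Integration.integral_nonneg) (simp add: h_def)
  ultimately show thesis
    by (intro that[of "(LINT xi|lborel. h xi) + 1"]) (auto intro!: add_increasing2)
qed

section \<open>Dual weights\<close>

definition dual_weight :: "(real^2 \<Rightarrow> real) \<Rightarrow> (real^2 \<Rightarrow> complex) \<Rightarrow> real \<Rightarrow> real \<Rightarrow> real
    \<Rightarrow> real^2 \<Rightarrow> real" where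
  "dual_weight H T M R e x = indicator (ball 0 R) x * H x * (norm (T x) / M) powr e"

lemma dual_weight_measurable:
  assumes "H \<in> borel_measurable borel" "T \<in> borel_measurable borel"
  shows "dual_weight H T M R e \<in> borel_measurable borel"
proof -
  have "ball (0::real^2) R \<in> sets borel" by simp
  with assms show ?thesis
    unfolding dual_weight_def[abs_def] by measurable
qed

lemma dual_weight_bounds:
  assumes "0 \<le> H x" "H x \<le> 1" "norm (T x) \<le> M" "0 < M" "0 \<le> e"
  shows "0 \<le> dual_weight H T M R e x" "dual_weight H T M R e x \<le> 1"
proof -
  have "(norm (T x) / M) powr e \<le> 1"
    using assms by (intro powr_le1) auto
  with assms show "0 \<le> dual_weight H T M R e x" "dual_weight H T M R e x \<le> 1"
    by (auto simp: dual_weight_def mult_le_one split: split_indicator)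
qed

lemma nn_integral_dual_weight:
  assumes "H \<in> borel_measurable borel" "\<And>x. 0 \<le> H x" "T \<in> borel_measurable borel" "0 < M"
  shows "(\<integral>\<^sup>+x \<in> ball 0 R. norm (T x) powr q * dual_weight H T M R e x \<partial>lborel)
    = ennreal (1 / M powr e) * (\<integral>\<^sup>+x \<in> ball 0 R. norm (T x) powr (q + e) * H x \<partial>lborel)"
proof -
  have "(\<integral>\<^sup>+x \<in> ball 0 R. norm (T x) powr q * dual_weight H T M R e x \<partial>lborel)
      = (\<integral>\<^sup>+x \<in> ball 0 R. ennreal (1 / M powr e) * (norm (T x) powr (q + e) * H x) \<partial>lborel)"
    using assms by (intro nn_integral_cong)
      (auto simp: dual_weight_def powr_divide powr_add ennreal_mult[symmetric] mult_ac
        split: split_indicator)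
  also have "\<dots> = ennreal (1 / M powr e) * (\<integral>\<^sup>+x \<in> ball 0 R. norm (T x) powr (q + e) * H x \<partial>lborel)"
    using assms by (intro nn_set_integral_cmult) auto
  finally show ?thesis .
qed

lemma A_set_dual_weight:
  assumes H: "H \<in> borel_measurable borel" "\<And>x. 0 \<le> H x" and A: "A \<in> A_set alpha H" "0 < A"
    and T: "T \<in> borel_measurable borel" and M: "0 < M" and beta: "0 < beta" "beta < alpha"
    and I: "(\<integral>\<^sup>+x \<in> ball 0 R. norm (T x) powr Q * H x \<partial>lborel) = ennreal I" "0 < I"
  shows "A powr (beta / alpha) * I powr (1 - beta / alpha) / M powr (Q * (1 - beta / alpha))
    \<in> A_set beta (dual_weight H T M R (Q * (1 - beta / alpha)))"
proof -
  define g where "g x = indicator (ball 0 R) x * (norm (T x) / M) powr Q" for x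
  have "ball (0::real^2) R \<in> sets borel" by simp
  with T have g: "g \<in> borel_measurable borel"
    unfolding g_def by measurable
  have g_nonneg: "0 \<le> g x" for x
    by (simp add: g_def)
  have "(\<integral>\<^sup>+x. H x * g x \<partial>lborel) = (\<integral>\<^sup>+x \<in> ball 0 R. ennreal (1 / M powr Q) * (norm (T x) powr Q * H x) \<partial>lborel)"
    using M H by (intro nn_integral_cong)
      (auto simp: g_def powr_divide ennreal_mult[symmetric] split: split_indicator)
  also have "\<dots> = ennreal (I / M powr Q)"
    using H T I by (subst nn_set_integral_cmult) (auto simp: ennreal_mult[symmetric])
  finally have "A powr (beta / alpha) * (I / M powr Q) powr (1 - beta / alpha)
      \<in> A_set beta (\<lambda>x. H x * g x powr (1 - beta / alpha))"
    using H A g I M beta by (intro A_set_geometric_mean) (auto simp: g_nonneg)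
  moreover have "H x * g x powr (1 - beta / alpha) = dual_weight H T M R (Q * (1 - beta / alpha)) x" for x
    using M by (simp add: g_def dual_weight_def powr_powr split: split_indicator)
  moreover have "(I / M powr Q) powr (1 - beta / alpha) = I powr (1 - beta / alpha) / M powr (Q * (1 - beta / alpha))"
    using I M by (simp add: powr_divide powr_powr)
  ultimately show ?thesis by simp
qed

lemma alpha_weight_dual_weight:
  assumes H: "alpha_weight alpha H" and T: "T \<in> borel_measurable borel"
    and M: "0 < M" "\<And>x. norm (T x) \<le> M" and e: "0 \<le> e"
    and B: "B \<in> A_set beta (dual_weight H T M R e)"
    and nonzero: "(\<integral>\<^sup>+x \<in> ball 0 R. norm (T x) powr q * dual_weight H T M R e x \<partial>lborel) \<noteq> 0"
  shows "alpha_weight beta (dual_weight H T M R e)"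
proof -
  have "\<exists>x. dual_weight H T M R e x \<noteq> 0"
    using nonzero by (rule contrapos_np) simp
  moreover have "0 \<le> dual_weight H T M R e x \<and> dual_weight H T M R e x \<le> 1" for x
    using H M e dual_weight_bounds[of H x T M e R] by (auto simp: alpha_weight_def)
  ultimately show ?thesis
    using H T B dual_weight_measurable unfolding alpha_weight_def by auto
qed

lemma rescaled_estimate_of_dual_weights:
  fixes T :: "real^2 \<Rightarrow> complex"
  assumes H: "alpha_weight alpha H" and T: "T \<in> borel_measurable borel"
    and M: "0 < M" "\<And>x. norm (T x) \<le> M" and beta: "0 < beta" "beta < alpha"
    and q: "0 < q" and C: "0 < C" and R: "1 \<le> R" and L: "0 \<le> L"
    and est: "\<And>G. alpha_weight beta G \<Longrightarrow> (\<integral>\<^sup>+x \<in> ball 0 R. norm (T x) powr q * G x \<partial>lborel)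
      \<le> ennreal (C * A_alpha beta G * R powr (eps * beta / alpha) * L powr q)"
  shows "(\<integral>\<^sup>+x \<in> ball 0 R. norm (T x) powr (q * alpha / beta) * H x \<partial>lborel)
    \<le> ennreal (C powr (alpha / beta) * A_alpha alpha H * R powr eps * L powr (q * alpha / beta))"
proof (rule ennreal_le_of_real_le)
  define Q where "Q = q * alpha / beta"
  define e where "e = Q * (1 - beta / alpha)"
  have Qe: "q + e = Q" "0 \<le> e"
    using q beta by (auto simp: Q_def e_def field_simps)
  have Hm: "H \<in> borel_measurable borel" and H01: "\<And>x. 0 \<le> H x \<and> H x \<le> 1"
    and H_ne: "A_set alpha H \<noteq> {}"
    using H by (auto simp: alpha_weight_def)
  have "norm (T x) powr Q * H x \<le> M powr Q * 1" for x
    using M H01[of x] q beta by (intro mult_mono powr_mono2) (auto simp: Q_def)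
  then show "(\<integral>\<^sup>+x \<in> ball 0 R. norm (T x) powr (q * alpha / beta) * H x \<partial>lborel) < \<infinity>"
    unfolding Q_def by (intro set_nn_integral_bounded_less_top) auto
  fix I assume I: "(\<integral>\<^sup>+x \<in> ball 0 R. norm (T x) powr (q * alpha / beta) * H x \<partial>lborel) = ennreal I"
    and I_pos: "0 < I"
  define G where "G = dual_weight H T M R e"
  have G_int: "(\<integral>\<^sup>+x \<in> ball 0 R. norm (T x) powr q * G x \<partial>lborel) = ennreal (I / M powr e)"
    using nn_integral_dual_weight[OF Hm _ T M(1)] H01 I I_pos M
    by (simp add: G_def Qe Q_def ennreal_mult[symmetric])
  have G_A: "A powr (beta / alpha) * I powr (1 - beta / alpha) / M powr e \<in> A_set beta G"
    if "A \<in> A_set alpha H" "0 < A" for A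
    unfolding G_def e_def using Hm H01 that T M beta I I_pos
    by (intro A_set_dual_weight) (auto simp: Q_def)
  obtain A0 where A0: "A0 \<in> A_set alpha H" "0 < A0" using A_set_obtain_pos[OF H_ne] .
  have G: "alpha_weight beta G"
    using alpha_weight_dual_weight[OF H T M Qe(2) G_A[OF A0, unfolded G_def], of q] G_int I_pos M
    by (simp add: G_def)
  have "I \<le> (C powr (alpha / beta) * R powr eps * L powr Q) * A_alpha alpha H"
  proof (rule le_mult_A_alpha[OF H_ne])
    fix A assume A: "A \<in> A_set alpha H" "0 < A"
    have "0 < I / M powr e" using I_pos M by simp
    then have "I / M powr e \<le> C * A_alpha beta G * R powr (eps * beta / alpha) * L powr q"
      using est[OF G] G_int by (auto simp: ennreal_le_iff2)
    also have "\<dots> \<le> C * (A powr (beta / alpha) * I powr (1 - beta / alpha) / M powr e)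
        * R powr (eps * beta / alpha) * L powr q"
      by (intro mult_right_mono mult_left_mono A_alpha_le G_A A) (use C in auto)
    finally have "I \<le> C * (A powr (beta / alpha) * I powr (1 - beta / alpha))
        * R powr (eps * beta / alpha) * L powr q"
      using M by (simp add: field_simps)
    then have "I \<le> C powr (alpha / beta) * A * R powr eps * L powr Q"
      unfolding Q_def using I_pos C A R L beta by (intro absorb_powr_bound) auto
    then show "I \<le> C powr (alpha / beta) * R powr eps * L powr Q * A"
      by (simp add: mult_ac)
  qed (use C in auto)
  then show "I \<le> C powr (alpha / beta) * A_alpha alpha H * R powr eps * L powr (q * alpha / beta)"
    by (simp add: Q_def mult_ac)
qed

section \<open>Rescaling admissible exponents\<close>

definition weighted_estimate :: "(real^2 \<Rightarrow> real \<Rightarrow> real) \<Rightarrow> (real^2 \<Rightarrow> real \<Rightarrow> complex)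
    \<Rightarrow> real \<Rightarrow> real \<Rightarrow> real \<Rightarrow> real \<Rightarrow> real \<Rightarrow> bool" where
  "weighted_estimate phi a alpha p q eps C \<longleftrightarrow>
     (\<forall>lam R f H. 1 \<le> lam \<and> 1 \<le> R \<and> R \<le> lam \<and> in_Lp p f \<and>
        (\<forall>xi. xi \<notin> {0<..<1} \<longrightarrow> f xi = 0) \<and> alpha_weight alpha H \<longrightarrow>
        (\<integral>\<^sup>+ x \<in> ball 0 R. ennreal (norm (T_lam phi a lam f x) powr q * H x) \<partial>lborel)
          \<le> ennreal (C * A_alpha alpha H * R powr eps * Lp_norm p f powr q))"

lemma good_q_iff_weighted_estimate:
  "good_q phi a alpha p q \<longleftrightarrow> (\<forall>eps>0. \<exists>C>0. weighted_estimate phi a alpha p q eps C)"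
  unfolding good_q_def weighted_estimate_def ..

lemma weighted_estimate_rescale:
  assumes ph: "phase_ok phi" and am: "amplitude_ok a" and p: "1 \<le> p"
    and beta: "0 < beta" "beta < alpha" and q: "0 < q" and C: "0 < C"
    and est: "weighted_estimate phi a beta p q (eps * beta / alpha) C"
  shows "weighted_estimate phi a alpha p (q * alpha / beta) eps (C powr (alpha / beta))"
  unfolding weighted_estimate_def
proof (intro allI impI, elim conjE)
  fix lam R :: real and f :: "real \<Rightarrow> complex" and H :: "real^2 \<Rightarrow> real"
  assume lam: "1 \<le> lam" and R: "1 \<le> R" "R \<le> lam" and f: "in_Lp p f"
    and f_supp: "\<forall>xi. xi \<notin> {0<..<1} \<longrightarrow> f xi = 0" and H: "alpha_weight alpha H"
  have T: "T_lam phi a lam f \<in> borel_measurable borel"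
    using T_lam_measurable[OF ph am] lam f by (simp add: in_Lp_def)
  obtain M where M: "0 < M" "\<And>x. norm (T_lam phi a lam f x) \<le> M"
    using T_lam_bounded[OF ph am _ f p] lam by (metis less_le_trans zero_less_one)
  show "(\<integral>\<^sup>+x \<in> ball 0 R. norm (T_lam phi a lam f x) powr (q * alpha / beta) * H x \<partial>lborel)
      \<le> ennreal (C powr (alpha / beta) * A_alpha alpha H * R powr eps * Lp_norm p f powr (q * alpha / beta))"
    using est lam R f f_supp unfolding weighted_estimate_def
    by (intro rescaled_estimate_of_dual_weights[OF H T M beta q C R(1)]) (auto simp: Lp_norm_def)
qed

lemma good_q_rescale:
  assumes "phase_ok phi" "amplitude_ok a" "1 \<le> p" "0 < beta" "beta < alpha" "0 < q"
    and "good_q phi a beta p q"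
  shows "good_q phi a alpha p (q * alpha / beta)"
  unfolding good_q_iff_weighted_estimate
proof (intro allI impI)
  fix eps :: real assume "0 < eps"
  with assms have "0 < eps * beta / alpha" by simp
  with assms obtain C where "0 < C" "weighted_estimate phi a beta p q (eps * beta / alpha) C"
    unfolding good_q_iff_weighted_estimate by fastforce
  with assms show "\<exists>C>0. weighted_estimate phi a alpha p (q * alpha / beta) eps C"
    by (intro exI[of _ "C powr (alpha / beta)"]) (auto intro: weighted_estimate_rescale)
qed

theorem mainTheorem8:
  fixes phi :: "real^2 \<Rightarrow> real \<Rightarrow> real" and a :: "real^2 \<Rightarrow> real \<Rightarrow> complex"
    and p alpha beta :: real
  assumes "phase_ok phi" and "amplitude_ok a" and "p \<ge> 1"
    and "0 < beta" and "beta < alpha" and "alpha \<le> 2"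
  shows "Qexp phi a alpha p / ereal alpha \<le> Qexp phi a beta p / ereal beta"
proof -
  have "ereal beta * (Qexp phi a alpha p / ereal alpha) \<le> Qexp phi a beta p"
    unfolding Qexp_def[of phi a beta p]
  proof (rule Inf_greatest, clarify)
    fix q assume q: "0 < q" "good_q phi a beta p q"
    with assms have "Qexp phi a alpha p \<le> ereal (q * alpha / beta)"
      unfolding Qexp_def by (intro Inf_lower) (auto intro: good_q_rescale)
    then have "Qexp phi a alpha p / ereal alpha \<le> ereal (q * alpha / beta) / ereal alpha"
      using assms by (intro ereal_divide_right_mono) auto
    also have "\<dots> = ereal (q / beta)"
      using assms by simp
    finally have "ereal beta * (Qexp phi a alpha p / ereal alpha) \<le> ereal beta * ereal (q / beta)"
      using assms by (intro ereal_mult_left_mono) auto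
    with assms show "ereal beta * (Qexp phi a alpha p / ereal alpha) \<le> ereal q"
      by simp
  qed
  with assms show ?thesis by (subst ereal_le_divide_pos) auto
qed

end
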